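(* Let $d\ge1$, let $T$ be a $d\times d$ column-stochastic matrix ($T_{ij}\ge0$, $\sum_i T_{ij}=1$ for all $j$), and let $\Phi$ be any quantum channel on $d\times d$ matrices whose classical action is $T$. For each row $i$ write $\sum_{j=1}^d T_{ij}=n_i+a_i$ with $n_i\in\mathbb{Z}_{\ge0}$ and $a_i\in[0,1)$, and define the vector $\mathbf{s}^{(i)}(T)\in\mathbb{R}^{d^2}$ whose first $n_i$ entries equal $1$, whose $(n_i+1)$-th entry equals $a_i$, and whose remaining entries are $0$. Let $\boldsymbol{\mu}^\succ(T)=\frac1d\sum_{i=1}^d\mathbf{s}^{(i)}(T)$. Then $\boldsymbol{\mu}^\succ(T)\succ\boldsymbol{\lambda}(J_\Phi)$.
   Context: Fix an orthonormal basis $\{|i\rangle\}_{i=1}^d$ of $\mathbb{C}^d$, $|\Omega\rangle=\sum_i|ii\rangle$. The Jamio{\l}kowski state of a channel $\Phi$ is $J_\Phi=\frac1d(\Phi\otimes\mathcal{I})(|\Omega\rangle\langle\Omega|)$. The classical action of $\Phi$ is the matrix $T$ with $T_{ij}=\langle i|\Phi(|j\rangle\langle j|)|i\rangle$. $\boldsymbol{\lambda}(X)$ denotes the eigenvalues of a Hermitian $X$ in non-increasing order. For real vectors $x,y$ of equal length $n$, $x\succ y$ means $\sum_{i=1}^k x_i^\downarrow\ge\sum_{i=1}^k y_i^\downarrow$ for all $k=1,\dots,n$, with $x^\downarrow$ the non-increasing rearrangement. *)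

theory Defs
  imports "Jordan_Normal_Form.Char_Poly"
begin

definition psd_mat :: "nat \<Rightarrow> complex mat \<Rightarrow> bool" where
  "psd_mat n X \<longleftrightarrow> X \<in> carrier_mat n n \<and>
     (\<forall>v \<in> carrier_vec n.
        let q = (\<Sum>i<n. \<Sum>j<n. cnj (v $ i) * X $$ (i, j) * v $ j) in Im q = 0 \<and> Re q \<ge> 0)"

definition ket_bra :: "nat \<Rightarrow> nat \<Rightarrow> nat \<Rightarrow> complex mat" where
  "ket_bra d k l = mat d d (\<lambda>(a, b). if a = k \<and> b = l then 1 else 0)"

text \<open>(Phi tensor I_n) applied to a (d*n) x (d*n) matrix, with the Kronecker index
  convention |i> tensor |k> = basis vector i*n+k.\<close>
definition tensor_id_apply :: "(complex mat \<Rightarrow> complex mat) \<Rightarrow> nat \<Rightarrow> nat \<Rightarrow> complex mat \<Rightarrow> complex mat" where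
  "tensor_id_apply \<Phi> d n X =
     mat (d * n) (d * n) (\<lambda>(p, q).
        let i = p div n; k = p mod n; j = q div n; l = q mod n;
            M = mat d d (\<lambda>(a, b). X $$ (a * n + k, b * n + l))
        in \<Phi> M $$ (i, j))"

text \<open>Quantum channel on d x d matrices: linear, completely positive, trace preserving.\<close>
definition quantum_channel :: "nat \<Rightarrow> (complex mat \<Rightarrow> complex mat) \<Rightarrow> bool" where
  "quantum_channel d \<Phi> \<longleftrightarrow>
     (\<forall>A \<in> carrier_mat d d. \<Phi> A \<in> carrier_mat d d) \<and>
     (\<forall>A \<in> carrier_mat d d. \<forall>B \<in> carrier_mat d d. \<Phi> (A + B) = \<Phi> A + \<Phi> B) \<and>
     (\<forall>A \<in> carrier_mat d d. \<forall>c. \<Phi> (c \<cdot>\<^sub>m A) = c \<cdot>\<^sub>m \<Phi> A) \<and>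
     (\<forall>A \<in> carrier_mat d d. (\<Sum>i<d. \<Phi> A $$ (i, i)) = (\<Sum>i<d. A $$ (i, i))) \<and>
     (\<forall>n X. psd_mat (d * n) X \<longrightarrow> psd_mat (d * n) (tensor_id_apply \<Phi> d n X))"

text \<open>|Omega><Omega| with |Omega> = sum_i |ii>.\<close>
definition omega_proj :: "nat \<Rightarrow> complex mat" where
  "omega_proj d = mat (d * d) (d * d)
     (\<lambda>(p, q). if p div d = p mod d \<and> q div d = q mod d then 1 else 0)"

definition jamiolkowski :: "nat \<Rightarrow> (complex mat \<Rightarrow> complex mat) \<Rightarrow> complex mat" where
  "jamiolkowski d \<Phi> = (1 / of_nat d) \<cdot>\<^sub>m tensor_id_apply \<Phi> d d (omega_proj d)"

definition classical_action_is :: "nat \<Rightarrow> (complex mat \<Rightarrow> complex mat) \<Rightarrow> real mat \<Rightarrow> bool" where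
  "classical_action_is d \<Phi> T \<longleftrightarrow> T \<in> carrier_mat d d \<and>
     (\<forall>i < d. \<forall>j < d. \<Phi> (ket_bra d j j) $$ (i, i) = complex_of_real (T $$ (i, j)))"

definition column_stochastic :: "nat \<Rightarrow> real mat \<Rightarrow> bool" where
  "column_stochastic d T \<longleftrightarrow> T \<in> carrier_mat d d \<and>
     (\<forall>i < d. \<forall>j < d. T $$ (i, j) \<ge> 0) \<and> (\<forall>j < d. (\<Sum>i<d. T $$ (i, j)) = 1)"

definition eigvals_desc :: "complex mat \<Rightarrow> real list" where
  "eigvals_desc X = (THE l. length l = dim_row X \<and> sorted_wrt (\<ge>) l \<and>
      char_poly X = prod_list (map (\<lambda>e. [:- complex_of_real e, 1:]) l))"

definition majorizes :: "real list \<Rightarrow> real list \<Rightarrow> bool" where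
  "majorizes x y \<longleftrightarrow> length x = length y \<and>
     (\<forall>k \<in> {1..length x}. sum_list (take k (rev (sort x))) \<ge> sum_list (take k (rev (sort y))))"

text \<open>s^(i)(T) in R^{d^2} (entries indexed from 0): first n_i entries 1,
  entry n_i equal to a_i, remaining 0, where row sum = n_i + a_i.\<close>
definition s_vec :: "nat \<Rightarrow> real mat \<Rightarrow> nat \<Rightarrow> real list" where
  "s_vec d T i =
     (let r = (\<Sum>j<d. T $$ (i, j)); n = nat \<lfloor>r\<rfloor>; a = r - of_int \<lfloor>r\<rfloor>
      in map (\<lambda>p. if p < n then 1 else if p = n then a else 0) [0..<d * d])"

definition mu_maj :: "nat \<Rightarrow> real mat \<Rightarrow> real list" where
  "mu_maj d T = map (\<lambda>p. (1 / real d) * (\<Sum>i<d. s_vec d T i ! p)) [0..<d * d]"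

end

(* Write the Jamiolkowski state as J = sum_m l_m u_m u_m^* with orthonormal eigenvectors u_m,
   and let w_a(m) be the squared norm of the part of u_m in the a-th output block, so that
   sum_a w_a(m) = 1. The diagonal of J is T/d, hence sum_m l_m w_a(m) = r_a/d with r_a the a-th
   row sum of T. Trace preservation makes the partial trace of J over the output equal to I/d,
   so every diagonal block of J is at most I/d, which forces l_m w_a(m) <= 1/d. Consequently any
   k eigenvalues of J sum to at most sum_a min(k, r_a)/d, and this is exactly the sum of the k
   largest entries of mu(T). *)

theory Submission
  imports Defs "Jordan_Normal_Form.Schur_Decomposition"
begin

lemma complex_mult_cnj_cmod: "z * cnj z = complex_of_real (cmod z) ^ 2"
  using complex_norm_square[of z] by simp

lemma complex_cnj_mult_cmod: "cnj z * z = complex_of_real (cmod z) ^ 2"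
  using complex_norm_square[of z] by (simp add: mult.commute)

lemma mat_adjoint_dims [simp]:
  "dim_row (mat_adjoint A) = dim_col A" "dim_col (mat_adjoint A) = dim_row A"
  unfolding mat_adjoint_def by simp_all

lemma mat_adjoint_carrier [simp]: "A \<in> carrier_mat n m \<Longrightarrow> mat_adjoint A \<in> carrier_mat m n"
  unfolding carrier_mat_def by simp

lemma mat_adjoint_index [simp]:
  fixes A :: "complex mat"
  shows "i < dim_col A \<Longrightarrow> j < dim_row A \<Longrightarrow> mat_adjoint A $$ (i, j) = cnj (A $$ (j, i))"
  unfolding mat_adjoint_def by (simp add: mat_of_rows_index conjugate_vec_def)

lemma mat_adjoint_adjoint [simp]: "mat_adjoint (mat_adjoint A) = (A :: complex mat)"
  by (rule eq_matI) simp_all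

lemma mat_adjoint_mult:
  fixes A :: "complex mat"
  assumes "A \<in> carrier_mat n k" "B \<in> carrier_mat k m"
  shows "mat_adjoint (A * B) = mat_adjoint B * mat_adjoint A"
proof (rule eq_matI)
  fix i j assume "i < dim_row (mat_adjoint B * mat_adjoint A)" "j < dim_col (mat_adjoint B * mat_adjoint A)"
  then have i: "i < m" and j: "j < n" using assms by auto
  have "mat_adjoint (A * B) $$ (i, j) = cnj (\<Sum>t\<in>{0..<k}. A $$ (j, t) * B $$ (t, i))"
    using assms i j by (simp add: scalar_prod_def)
  also have "\<dots> = (\<Sum>t\<in>{0..<k}. mat_adjoint B $$ (i, t) * mat_adjoint A $$ (t, j))"
    unfolding cnj_sum using assms i j by (intro sum.cong) (auto simp: mult.commute)
  finally show "mat_adjoint (A * B) $$ (i, j) = (mat_adjoint B * mat_adjoint A) $$ (i, j)"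
    using assms i j by (simp add: scalar_prod_def)
qed (use assms in simp_all)

lemma mat_adjoint_one [simp]: "mat_adjoint (1\<^sub>m n :: complex mat) = 1\<^sub>m n"
  by (rule eq_matI) simp_all

lemma mat_adjoint_zero [simp]: "mat_adjoint (0\<^sub>m n m :: complex mat) = 0\<^sub>m m n"
  by (rule eq_matI) simp_all

lemma mat_adjoint_four_block_mat:
  fixes A :: "complex mat"
  assumes "A \<in> carrier_mat n1 m1" "B \<in> carrier_mat n1 m2"
    "C \<in> carrier_mat n2 m1" "D \<in> carrier_mat n2 m2"
  shows "mat_adjoint (four_block_mat A B C D)
    = four_block_mat (mat_adjoint A) (mat_adjoint C) (mat_adjoint B) (mat_adjoint D)"
  by (rule eq_matI) (use assms in auto)

definition unitary_mat :: "nat \<Rightarrow> complex mat \<Rightarrow> bool" where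
  "unitary_mat n U \<longleftrightarrow> U \<in> carrier_mat n n \<and> mat_adjoint U * U = 1\<^sub>m n"

lemma unitary_matD:
  "unitary_mat n U \<Longrightarrow> U \<in> carrier_mat n n"
  "unitary_mat n U \<Longrightarrow> mat_adjoint U * U = 1\<^sub>m n"
  "unitary_mat n U \<Longrightarrow> U * mat_adjoint U = 1\<^sub>m n"
  unfolding unitary_mat_def
  using mat_mult_left_right_inverse[OF mat_adjoint_carrier[of U n n]] by auto

lemma unitary_mat_mult:
  assumes U: "unitary_mat n U" and V: "unitary_mat n V"
  shows "unitary_mat n (U * V)"
proof -
  note UV = unitary_matD(1)[OF U] unitary_matD(1)[OF V]
  have "mat_adjoint (U * V) * (U * V) = mat_adjoint V * (mat_adjoint U * U) * V"
    using UV by (simp add: mat_adjoint_mult[of _ n n] assoc_mult_mat[of _ n n _ n _ n] mult_carrier_mat[of _ n n])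
  then show ?thesis using UV unitary_matD(2)[OF U] unitary_matD(2)[OF V] unfolding unitary_mat_def by simp
qed

lemma unitary_mat_orthonormal_cols:
  assumes "unitary_mat n U" "i < n" "j < n"
  shows "(\<Sum>p<n. cnj (U $$ (p, i)) * U $$ (p, j)) = (if i = j then 1 else 0)"
proof -
  have "(mat_adjoint U * U) $$ (i, j) = (\<Sum>p<n. cnj (U $$ (p, i)) * U $$ (p, j))"
    using assms unitary_matD(1)[OF assms(1)] by (simp add: scalar_prod_def lessThan_atLeast0)
  then show ?thesis using assms unitary_matD(2)[OF assms(1)] by simp
qed

lemma cscalar_prod_self_real:
  fixes w :: "complex vec"
  shows "w \<bullet>c w = complex_of_real (Re (w \<bullet>c w))" "Re (w \<bullet>c w) \<ge> 0"
  using conjugate_square_ge_0_vec[of w] by (auto simp: less_eq_complex_def complex_eq_iff)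

lemma unitary_mat_with_first_col:
  fixes v :: "complex vec"
  assumes v: "v \<in> carrier_vec n" and v0: "v \<noteq> 0\<^sub>v n"
  obtains W c where "unitary_mat n W" "col W 0 = c \<cdot>\<^sub>v v"
proof -
  interpret cof_vec_space n "TYPE(complex)" .
  define b where "b = basis_completion v"
  note bc = basis_completion[OF v v0, folded b_def]
  define ws where "ws = gram_schmidt n b"
  note gs = gram_schmidt_result[OF bc(2) bc(4) bc(5) ws_def]
  have n: "0 < n" and len: "length ws = n" using v v0 gs(4) bc(6) by auto
  obtain vs where "b = v # vs" using bc(6,7) n by (cases b) auto
  then have ws0: "ws ! 0 = v"
    using gram_schmidt_hd[OF v] len n unfolding ws_def by (metis hd_conv_nth length_0_conv not_less0)
  have ws: "i < n \<Longrightarrow> ws ! i \<in> carrier_vec n" for i using gs(3) len by auto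
  define c where "c i = 1 / sqrt (Re (ws ! i \<bullet>c ws ! i))" for i
  have norm: "complex_of_real (c i * c i) * (ws ! i \<bullet>c ws ! i) = 1" if i: "i < n" for i
  proof -
    have "ws ! i \<bullet>c ws ! i \<noteq> 0" using gs(2) i len unfolding corthogonal_def by auto
    then have "Re (ws ! i \<bullet>c ws ! i) > 0"
      using cscalar_prod_self_real[of "ws ! i"] by (metis less_eq_real_def of_real_0)
    then show ?thesis unfolding c_def by (subst (3) cscalar_prod_self_real(1)) (simp flip: of_real_mult)
  qed
  define W where "W = mat n n (\<lambda>(p, i). complex_of_real (c i) * (ws ! i $ p))"
  have "(mat_adjoint W * W) $$ (i, j) = 1\<^sub>m n $$ (i, j)" if i: "i < n" and j: "j < n" for i j
  proof -
    have "(mat_adjoint W * W) $$ (i, j) = (\<Sum>p\<in>{0..<n}. cnj (W $$ (p, i)) * W $$ (p, j))"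
      using i j by (simp add: W_def scalar_prod_def)
    also have "\<dots> = complex_of_real (c i * c j) * (\<Sum>p\<in>{0..<n}. ws ! j $ p * cnj (ws ! i $ p))"
      unfolding sum_distrib_left using i j by (intro sum.cong) (auto simp: W_def)
    also have "(\<Sum>p\<in>{0..<n}. ws ! j $ p * cnj (ws ! i $ p)) = ws ! j \<bullet>c ws ! i"
      using ws[OF i] ws[OF j] by (simp add: scalar_prod_def)
    also have "complex_of_real (c i * c j) * (ws ! j \<bullet>c ws ! i) = 1\<^sub>m n $$ (i, j)"
      using norm[OF i] gs(2) i j len unfolding corthogonal_def by (auto simp del: of_real_mult)
    finally show ?thesis .
  qed
  then have "unitary_mat n W" unfolding unitary_mat_def by (auto simp: W_def intro!: eq_matI)
  moreover have "col W 0 = complex_of_real (c 0) \<cdot>\<^sub>v v"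
    using v ws0 n by (auto simp: W_def intro!: eq_vecI)
  ultimately show ?thesis by (rule that)
qed

section \<open>Spectral theorem for Hermitian matrices\<close>

lemma hermitian_deflation:
  fixes A W :: "complex mat"
  assumes A: "A \<in> carrier_mat (Suc m) (Suc m)" and herm: "mat_adjoint A = A"
    and W: "unitary_mat (Suc m) W" and eigen: "A *\<^sub>v col W 0 = e \<cdot>\<^sub>v col W 0"
  obtains x B where "B \<in> carrier_mat m m" "mat_adjoint B = B"
    "mat_adjoint W * A * W = four_block_mat (mat 1 1 (\<lambda>_. complex_of_real x)) (0\<^sub>m 1 m) (0\<^sub>m m 1) B"
proof -
  define n where "n = Suc m"
  have Wc: "W \<in> carrier_mat n n" using unitary_matD(1)[OF W] unfolding n_def .
  have A: "A \<in> carrier_mat n n" using A unfolding n_def .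
  define A' where "A' = mat_adjoint W * A * W"
  have A': "A' \<in> carrier_mat n n" unfolding A'_def using A Wc by auto
  have A'_assoc: "A' = mat_adjoint W * (A * W)"
    unfolding A'_def using A Wc by (simp add: assoc_mult_mat[of _ n n])
  have herm': "mat_adjoint A' = A'"
  proof -
    have "mat_adjoint A' = mat_adjoint (A * W) * W"
      unfolding A'_assoc using A Wc by (simp add: mat_adjoint_mult[of "mat_adjoint W" n n "A * W" n])
    also have "mat_adjoint (A * W) = mat_adjoint W * A"
      using A Wc herm by (simp add: mat_adjoint_mult[of A n n W n])
    finally show ?thesis unfolding A'_def .
  qed
  have col0: "A' $$ (i, 0) = (if i = 0 then e else 0)" if i: "i < n" for i
  proof -
    have "col (A * W) 0 = e \<cdot>\<^sub>v col W 0"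
      using A Wc eigen by (simp add: col_mult2 n_def mult_mat_vec_def)
    then have "A' $$ (i, 0) = e * (row (mat_adjoint W) i \<bullet> col W 0)"
      unfolding A'_assoc using i A Wc by (simp add: n_def)
    also have "row (mat_adjoint W) i \<bullet> col W 0 = (mat_adjoint W * W) $$ (i, 0)"
      using i Wc by (simp add: n_def)
    finally show ?thesis using i unitary_matD(2)[OF W] by (simp add: n_def)
  qed
  have conj_sym: "A' $$ (i, j) = cnj (A' $$ (j, i))" if "i < n" "j < n" for i j
    using A' that herm' by (metis carrier_matD mat_adjoint_index)
  define x where "x = Re e"
  have e: "e = complex_of_real x"
    using conj_sym[of 0 0] col0[of 0] unfolding x_def n_def by (simp add: complex_eq_iff)
  define B where "B = mat m m (\<lambda>(i, j). A' $$ (Suc i, Suc j))"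
  have B: "B \<in> carrier_mat m m" unfolding B_def by simp
  have "mat_adjoint B = B"
  proof (rule eq_matI)
    fix i j assume "i < dim_row B" "j < dim_col B"
    then have "i < m" "j < m" using B by auto
    then show "mat_adjoint B $$ (i, j) = B $$ (i, j)"
      using conj_sym[of "Suc i" "Suc j"] B by (simp add: B_def n_def)
  qed (use B in auto)
  moreover have "A' = four_block_mat (mat 1 1 (\<lambda>_. complex_of_real x)) (0\<^sub>m 1 m) (0\<^sub>m m 1) B"
  proof (rule eq_matI)
    fix i j assume "i < dim_row (four_block_mat (mat 1 1 (\<lambda>_. complex_of_real x)) (0\<^sub>m 1 m) (0\<^sub>m m 1) B)"
      "j < dim_col (four_block_mat (mat 1 1 (\<lambda>_. complex_of_real x)) (0\<^sub>m 1 m) (0\<^sub>m m 1) B)"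
    then have i: "i < n" and j: "j < n" using B by (auto simp: n_def)
    show "A' $$ (i, j) = four_block_mat (mat 1 1 (\<lambda>_. complex_of_real x)) (0\<^sub>m 1 m) (0\<^sub>m m 1) B $$ (i, j)"
    proof (cases "i = 0 \<or> j = 0")
      case True
      then show ?thesis using col0[OF i] col0[OF j] conj_sym[of 0 j] i j B e by (auto simp: n_def)
    next
      case False
      then obtain i' j' where "i = Suc i'" "j = Suc j'" by (cases i; cases j) auto
      then show ?thesis using i j B by (simp add: B_def n_def)
    qed
  qed (use A' B in \<open>auto simp: n_def\<close>)
  ultimately show ?thesis using B that unfolding A'_def by blast
qed

definition real_diag_mat :: "real list \<Rightarrow> complex mat" where
  "real_diag_mat l = mat (length l) (length l) (\<lambda>(i, j). if i = j then complex_of_real (l ! i) else 0)"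

lemma real_diag_mat_carrier [simp]: "real_diag_mat l \<in> carrier_mat (length l) (length l)"
  unfolding real_diag_mat_def carrier_mat_def by simp

lemma real_diag_mat_Cons:
  "real_diag_mat (x # l) = four_block_mat (mat 1 1 (\<lambda>_. complex_of_real x))
     (0\<^sub>m 1 (length l)) (0\<^sub>m (length l) 1) (real_diag_mat l)"
  by (rule eq_matI) (auto simp: real_diag_mat_def nth_Cons')

theorem hermitian_unitary_diagonalization:
  fixes A :: "complex mat"
  assumes "A \<in> carrier_mat n n" "mat_adjoint A = A"
  obtains U l where "unitary_mat n U" "length l = n" "A = U * real_diag_mat l * mat_adjoint U"
  using assms
proof (induction n arbitrary: A thesis)
  case 0
  then show ?case
    by (intro "0.prems"(1)[of "1\<^sub>m 0" "[]"]) (auto simp: unitary_mat_def intro!: eq_matI)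
next
  case (Suc m)
  have A: "A \<in> carrier_mat (Suc m) (Suc m)" by fact
  obtain es where es: "char_poly A = (\<Prod>a\<leftarrow>es. [:- a, 1:])" "length es = Suc m"
    using char_poly_factorized[OF A] by blast
  then obtain e where "poly (char_poly A) e = 0" by (cases es) auto
  then obtain v where "eigenvector A v e"
    using eigenvalue_root_char_poly[OF A] unfolding eigenvalue_def by blast
  then have v: "v \<in> carrier_vec (Suc m)" "v \<noteq> 0\<^sub>v (Suc m)" "A *\<^sub>v v = e \<cdot>\<^sub>v v"
    using A unfolding eigenvector_def by auto
  obtain W c where W: "unitary_mat (Suc m) W" and col: "col W 0 = c \<cdot>\<^sub>v v"
    using unitary_mat_with_first_col[OF v(1,2)] .
  have "A *\<^sub>v col W 0 = e \<cdot>\<^sub>v col W 0"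
    unfolding col using A v by (simp add: mult_mat_vec smult_smult_assoc mult.commute)
  then obtain x B where B: "B \<in> carrier_mat m m" "mat_adjoint B = B"
    and AW: "mat_adjoint W * A * W = four_block_mat (mat 1 1 (\<lambda>_. complex_of_real x)) (0\<^sub>m 1 m) (0\<^sub>m m 1) B"
    using hermitian_deflation[OF A Suc.prems(3) W] by blast
  obtain V l where V: "unitary_mat m V" and l: "length l = m"
    and BV: "B = V * real_diag_mat l * mat_adjoint V"
    using Suc.IH[OF _ B] by blast
  define F where "F = four_block_mat (1\<^sub>m 1) (0\<^sub>m 1 m) (0\<^sub>m m 1) V"
  have carr: "(1\<^sub>m 1 :: complex mat) \<in> carrier_mat 1 1" "(0\<^sub>m 1 m :: complex mat) \<in> carrier_mat 1 m"
    "(0\<^sub>m m 1 :: complex mat) \<in> carrier_mat m 1" "mat 1 1 (\<lambda>_. complex_of_real x) \<in> carrier_mat 1 1"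
    "real_diag_mat l \<in> carrier_mat m m" "V \<in> carrier_mat m m" "mat_adjoint V \<in> carrier_mat m m"
    using l unitary_matD(1)[OF V] by auto
  have adjF: "mat_adjoint F = four_block_mat (1\<^sub>m 1) (0\<^sub>m 1 m) (0\<^sub>m m 1) (mat_adjoint V)"
    unfolding F_def mat_adjoint_four_block_mat[OF carr(1-3,6)] by simp
  have "mat_adjoint F * F = 1\<^sub>m (Suc m)"
    unfolding adjF unfolding F_def mult_four_block_mat[OF carr(1-3,7) carr(1-3,6)]
    using unitary_matD[OF V] carr by simp
  then have F: "unitary_mat (Suc m) F"
    unfolding unitary_mat_def F_def using four_block_carrier_mat[OF carr(1,6), of "0\<^sub>m 1 m" "0\<^sub>m m 1"] by simp
  have "F * real_diag_mat (x # l) = four_block_mat (mat 1 1 (\<lambda>_. complex_of_real x))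
      (0\<^sub>m 1 m) (0\<^sub>m m 1) (V * real_diag_mat l)"
    unfolding F_def real_diag_mat_Cons l mult_four_block_mat[OF carr(1-3,6) carr(4,2,3,5)]
    using carr by simp
  then have FDF: "F * real_diag_mat (x # l) * mat_adjoint F = mat_adjoint W * A * W"
    unfolding AW BV adjF
    using mult_four_block_mat[OF carr(4,2,3) mult_carrier_mat[OF carr(6,5)] carr(1-3,7)] carr
    by (simp add: assoc_mult_mat[of _ m m _ m _ m])
  have carr': "W \<in> carrier_mat (Suc m) (Suc m)" "F \<in> carrier_mat (Suc m) (Suc m)"
    "real_diag_mat (x # l) \<in> carrier_mat (Suc m) (Suc m)"
    using unitary_matD(1)[OF W] unitary_matD(1)[OF F] real_diag_mat_carrier[of "x # l"] l by auto
  have "A = (W * mat_adjoint W) * A * (W * mat_adjoint W)"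
    using A unitary_matD(3)[OF W] by simp
  also have "\<dots> = W * (mat_adjoint W * A * W) * mat_adjoint W"
    using A carr' by (simp add: assoc_mult_mat[of _ "Suc m" "Suc m" _ "Suc m" _ "Suc m"] mult_carrier_mat[of _ "Suc m" "Suc m"])
  also have "\<dots> = (W * F) * real_diag_mat (x # l) * mat_adjoint (W * F)"
    unfolding FDF[symmetric] using carr'
    by (simp add: mat_adjoint_mult[of W "Suc m" "Suc m" F "Suc m"]
        assoc_mult_mat[of _ "Suc m" "Suc m" _ "Suc m" _ "Suc m"] mult_carrier_mat[of _ "Suc m" "Suc m"])
  finally have "A = (W * F) * real_diag_mat (x # l) * mat_adjoint (W * F)" .
  with Suc.prems(1)[OF unitary_mat_mult[OF W F], of "x # l"] show ?case using l by simp
qed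

lemma unitary_diag_index:
  assumes U: "U \<in> carrier_mat n n" and l: "length l = n" and p: "p < n" and q: "q < n"
  shows "(U * real_diag_mat l * mat_adjoint U) $$ (p, q)
    = (\<Sum>m<n. U $$ (p, m) * complex_of_real (l ! m) * cnj (U $$ (q, m)))"
proof -
  have UD: "(U * real_diag_mat l) $$ (p, t) = U $$ (p, t) * complex_of_real (l ! t)" if t: "t < n" for t
  proof -
    have "(U * real_diag_mat l) $$ (p, t) = (\<Sum>s\<in>{0..<n}. U $$ (p, s) * real_diag_mat l $$ (s, t))"
      using U l p t by (simp add: scalar_prod_def real_diag_mat_def)
    also have "\<dots> = (\<Sum>s\<in>{0..<n}. if s = t then U $$ (p, t) * complex_of_real (l ! t) else 0)"
      using l t by (intro sum.cong) (simp_all add: real_diag_mat_def)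
    finally show ?thesis using t by simp
  qed
  have "(U * real_diag_mat l * mat_adjoint U) $$ (p, q)
      = (\<Sum>t\<in>{0..<n}. (U * real_diag_mat l) $$ (p, t) * mat_adjoint U $$ (t, q))"
    using U l p q real_diag_mat_carrier[of l] by (simp add: scalar_prod_def)
  also have "\<dots> = (\<Sum>t\<in>{0..<n}. U $$ (p, t) * complex_of_real (l ! t) * cnj (U $$ (q, t)))"
    using U q by (intro sum.cong) (simp_all add: UD)
  finally show ?thesis by (simp add: lessThan_atLeast0)
qed

lemma char_poly_unitary_diag:
  assumes U: "unitary_mat n U" and l: "length l = n"
  shows "char_poly (U * real_diag_mat l * mat_adjoint U) = (\<Prod>e\<leftarrow>l. [:- complex_of_real e, 1:])"
proof -
  have D: "real_diag_mat l \<in> carrier_mat n n" using l real_diag_mat_carrier by metis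
  have "similar_mat_wit (U * real_diag_mat l * mat_adjoint U) (real_diag_mat l) U (mat_adjoint U)"
    unfolding similar_mat_wit_def Let_def using D unitary_matD[OF U] by auto
  then have "char_poly (U * real_diag_mat l * mat_adjoint U) = char_poly (real_diag_mat l)"
    by (intro char_poly_similar) (auto simp: similar_mat_def)
  also have "\<dots> = (\<Prod>a\<leftarrow>diag_mat (real_diag_mat l). [:- a, 1:])"
    by (rule char_poly_upper_triangular[OF D]) (simp add: upper_triangular_def real_diag_mat_def)
  also have "diag_mat (real_diag_mat l) = map complex_of_real l"
    by (rule nth_equalityI) (simp_all add: diag_mat_def real_diag_mat_def)
  finally show ?thesis by (simp add: o_def)
qed

lemma prod_list_map_mset_eq:
  "mset xs = mset ys \<Longrightarrow> prod_list (map (f :: _ \<Rightarrow> _ :: comm_monoid_mult) xs) = prod_list (map f ys)"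
  by (metis mset_map prod_mset_prod_list)

lemma prod_linear_factors_eq_imp_mset_eq:
  fixes xs ys :: "'a :: idom list"
  assumes "(\<Prod>a\<leftarrow>xs. [:- a, 1:]) = (\<Prod>a\<leftarrow>ys. [:- a, 1:])"
  shows "mset xs = mset ys"
  using assms
proof (induction xs arbitrary: ys)
  case Nil
  show ?case
  proof (cases ys)
    case (Cons y ys')
    have "poly (\<Prod>a\<leftarrow>ys. [:- a, 1:]) y = 0" unfolding Cons by simp
    then show ?thesis using Nil by simp
  qed simp
next
  case (Cons x xs)
  have "poly (\<Prod>a\<leftarrow>ys. [:- a, 1:]) x = 0" unfolding Cons.prems[symmetric] by simp
  then have x: "x \<in> set ys" by (auto simp: poly_prod_list prod_list_zero_iff)
  then have ys: "mset ys = mset (x # remove1 x ys)" by simp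
  then have "(\<Prod>a\<leftarrow>ys. [:- a, 1:]) = [:- x, 1:] * (\<Prod>a\<leftarrow>remove1 x ys. [:- a, 1:])"
    using prod_list_map_mset_eq[OF ys, of "\<lambda>a. [:- a, 1:]"] by simp
  then have "[:- x, 1:] * (\<Prod>a\<leftarrow>xs. [:- a, 1:]) = [:- x, 1:] * (\<Prod>a\<leftarrow>remove1 x ys. [:- a, 1:])"
    using Cons.prems by simp
  then have "(\<Prod>a\<leftarrow>xs. [:- a, 1:]) = (\<Prod>a\<leftarrow>remove1 x ys. [:- a, 1:])"
    by (subst (asm) mult_left_cancel) auto
  then show ?case using Cons.IH ys by simp
qed

lemma eigvals_desc_eq_rev_sort:
  assumes A: "A \<in> carrier_mat n n" and l: "length l = n"
    and cp: "char_poly A = (\<Prod>e\<leftarrow>l. [:- complex_of_real e, 1:])"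
  shows "eigvals_desc A = rev (sort l)"
  unfolding eigvals_desc_def
proof (rule the_equality)
  have "(\<Prod>e\<leftarrow>rev (sort l). [:- complex_of_real e, 1:]) = char_poly A"
    unfolding cp by (rule prod_list_map_mset_eq) simp
  then show "length (rev (sort l)) = dim_row A \<and> sorted_wrt (\<ge>) (rev (sort l)) \<and>
    char_poly A = (\<Prod>e\<leftarrow>rev (sort l). [:- complex_of_real e, 1:])"
    using A l by (simp add: sorted_wrt_rev)
next
  fix l' assume "length l' = dim_row A \<and> sorted_wrt (\<ge>) l' \<and>
    char_poly A = (\<Prod>e\<leftarrow>l'. [:- complex_of_real e, 1:])"
  then have s: "sorted (rev l')" and cp': "char_poly A = (\<Prod>e\<leftarrow>l'. [:- complex_of_real e, 1:])"
    by (auto simp: sorted_wrt_rev)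
  have "mset (map complex_of_real l') = mset (map complex_of_real l)"
    using cp cp' by (intro prod_linear_factors_eq_imp_mset_eq) (simp add: o_def)
  then have "image_mset Re (mset (map complex_of_real l')) = image_mset Re (mset (map complex_of_real l))"
    by simp
  then have "mset (rev l') = mset l" by (simp add: multiset.map_comp o_def)
  from properties_for_sort[OF this s] show "l' = rev (sort l)" by simp
qed

definition quad_form :: "nat \<Rightarrow> complex mat \<Rightarrow> complex vec \<Rightarrow> complex" where
  "quad_form n X v = (\<Sum>i<n. \<Sum>j<n. cnj (v $ i) * X $$ (i, j) * v $ j)"

lemma psd_mat_iff_quad_form:
  "psd_mat n X \<longleftrightarrow> X \<in> carrier_mat n n \<and>
     (\<forall>v \<in> carrier_vec n. Im (quad_form n X v) = 0 \<and> Re (quad_form n X v) \<ge> 0)"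
  unfolding psd_mat_def quad_form_def Let_def ..

lemma quad_form_two_point:
  assumes ij: "i < n" "j < n" "i \<noteq> j"
  shows "quad_form n X (vec n (\<lambda>t. (if t = i then a else 0) + (if t = j then b else 0))) =
    cnj a * (X $$ (i, i) * a + X $$ (i, j) * b) + cnj b * (X $$ (j, i) * a + X $$ (j, j) * b)"
proof -
  define f where "f t = (if t = i then a else 0) + (if t = j then b else 0)" for t
  have "quad_form n X (vec n f) = (\<Sum>s<n. cnj (f s) * (\<Sum>t<n. X $$ (s, t) * f t))"
    unfolding quad_form_def sum_distrib_left by (intro sum.cong refl) (simp add: mult.assoc)
  also have "\<dots> = (\<Sum>s<n. cnj (f s) * (X $$ (s, i) * a + X $$ (s, j) * b))"
    using ij by (simp add: f_def distrib_left sum.distrib if_distrib[of "(*) _"] cong: if_cong)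
  also have "\<dots> = cnj a * (X $$ (i, i) * a + X $$ (i, j) * b) + cnj b * (X $$ (j, i) * a + X $$ (j, j) * b)"
    using ij by (simp add: f_def distrib_right sum.distrib if_distrib[of cnj]
        if_distrib[of "\<lambda>x. x * _"] cong: if_cong)
  finally show ?thesis unfolding f_def .
qed

lemma psd_mat_hermitian:
  assumes psd: "psd_mat n X"
  shows "mat_adjoint X = X"
proof -
  have X: "X \<in> carrier_mat n n" and real: "\<And>v. v \<in> carrier_vec n \<Longrightarrow> Im (quad_form n X v) = 0"
    using psd unfolding psd_mat_iff_quad_form by auto
  have diag: "Im (X $$ (i, i)) = 0" if i: "i < n" for i
  proof -
    have "quad_form n X (vec n (\<lambda>t. if t = i then 1 else 0)) = X $$ (i, i)"
      using i by (simp add: quad_form_def if_distrib[of cnj] if_distrib[of "\<lambda>x. x * _"] if_distrib[of "(*) _"] cong: if_cong)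
    then show ?thesis using real[of "vec n (\<lambda>t. if t = i then 1 else 0)"] by simp
  qed
  text \<open>Polarisation: test the form on \<open>e\<^sub>i + e\<^sub>j\<close> and on \<open>e\<^sub>i + \<i> e\<^sub>j\<close>.\<close>
  have off_diag: "X $$ (i, j) = cnj (X $$ (j, i))" if ij: "i < n" "j < n" "i \<noteq> j" for i j
  proof -
    have "Im (X $$ (i, j)) + Im (X $$ (j, i)) = 0"
      using real[of "vec n (\<lambda>t. (if t = i then 1 else 0) + (if t = j then 1 else 0))"]
      unfolding quad_form_two_point[OF ij] using diag ij by simp
    moreover have "Re (X $$ (i, j)) - Re (X $$ (j, i)) = 0"
      using real[of "vec n (\<lambda>t. (if t = i then 1 else 0) + (if t = j then \<i> else 0))"]
      unfolding quad_form_two_point[OF ij] using diag ij by simp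
    ultimately show ?thesis by (simp add: complex_eq_iff)
  qed
  show ?thesis
  proof (rule eq_matI)
    fix i j assume "i < dim_row X" "j < dim_col X"
    then have i: "i < n" and j: "j < n" using X by auto
    show "mat_adjoint X $$ (i, j) = X $$ (i, j)"
      using diag[OF i] off_diag[OF j i] i j X by (cases "i = j") (auto simp: complex_eq_iff)
  qed (use X in auto)
qed

section \<open>The Jamiolkowski state\<close>

lemma block_index_less:
  fixes a k d n :: nat
  assumes "a < d" "k < n"
  shows "a * n + k < d * n"
proof -
  have "a * n + k < (a + 1) * n" using assms by simp
  also have "\<dots> \<le> d * n" using assms by (intro mult_right_mono) auto
  finally show ?thesis .
qed

lemma sum_blocks:
  fixes F :: "nat \<Rightarrow> 'a :: comm_monoid_add"
  shows "(\<Sum>p<d * n. F p) = (\<Sum>a<d. \<Sum>k<n. F (a * n + k))"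
proof (induction d)
  case (Suc d)
  have "(\<Sum>p<Suc d * n. F p) = (\<Sum>p<d * n. F p) + (\<Sum>p\<in>{d * n..<d * n + n}. F p)"
    by (simp add: add.commute sum.atLeastLessThan_concat[symmetric] lessThan_atLeast0)
  also have "(\<Sum>p\<in>{d * n..<d * n + n}. F p) = (\<Sum>k<n. F (d * n + k))"
    using sum.shift_bounds_nat_ivl[of F 0 "d * n" n] by (simp add: add.commute lessThan_atLeast0)
  finally show ?case using Suc by simp
qed simp

lemma jamiolkowski_carrier: "jamiolkowski d \<Phi> \<in> carrier_mat (d * d) (d * d)"
  unfolding jamiolkowski_def tensor_id_apply_def by simp

lemma jamiolkowski_index:
  assumes "a < d" "b < d" "k < d" "l < d"
  shows "jamiolkowski d \<Phi> $$ (a * d + k, b * d + l) = \<Phi> (ket_bra d k l) $$ (a, b) / of_nat d"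
proof -
  have "mat d d (\<lambda>(a', b'). omega_proj d $$ (a' * d + k, b' * d + l)) = ket_bra d k l"
    using assms block_index_less[of _ d k d] block_index_less[of _ d l d]
    by (intro eq_matI) (auto simp: omega_proj_def ket_bra_def)
  then show ?thesis
    unfolding jamiolkowski_def tensor_id_apply_def
    using assms block_index_less[OF assms(1,3)] block_index_less[OF assms(2,4)] by (simp add: Let_def)
qed

lemma psd_mat_omega_proj: "psd_mat (d * d) (omega_proj d)"
  unfolding psd_mat_iff_quad_form
proof (intro conjI ballI)
  show "omega_proj d \<in> carrier_mat (d * d) (d * d)" unfolding omega_proj_def by simp
next
  fix v :: "complex vec"
  define s where "s = (\<Sum>j<d * d. if j div d = j mod d then v $ j else 0)"
  have "quad_form (d * d) (omega_proj d) v = cnj s * s"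
    unfolding quad_form_def s_def cnj_sum sum_product
    by (intro sum.cong refl) (simp add: omega_proj_def)
  also have "\<dots> = complex_of_real ((cmod s)\<^sup>2)"
    using complex_norm_square[of s] by (simp only: mult.commute)
  finally have "quad_form (d * d) (omega_proj d) v = complex_of_real ((cmod s)\<^sup>2)" .
  then show "Im (quad_form (d * d) (omega_proj d) v) = 0" "Re (quad_form (d * d) (omega_proj d) v) \<ge> 0"
    by simp_all
qed

lemma psd_mat_jamiolkowski:
  assumes "quantum_channel d \<Phi>"
  shows "psd_mat (d * d) (jamiolkowski d \<Phi>)"
proof -
  let ?X = "tensor_id_apply \<Phi> d d (omega_proj d)"
  have X: "psd_mat (d * d) ?X"
    using assms psd_mat_omega_proj unfolding quantum_channel_def by blast
  have "quad_form (d * d) (jamiolkowski d \<Phi>) v = complex_of_real (1 / real d) * quad_form (d * d) ?X v" for v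
    unfolding jamiolkowski_def quad_form_def sum_distrib_left using X[unfolded psd_mat_iff_quad_form]
    by (intro sum.cong refl) (auto simp: mult_ac)
  then show ?thesis
    using X jamiolkowski_carrier unfolding psd_mat_iff_quad_form by simp
qed

text \<open>The left-hand side is the partial trace over the channel output.\<close>
lemma jamiolkowski_partial_trace:
  assumes Q: "quantum_channel d \<Phi>" and k: "k < d" and l: "l < d"
  shows "(\<Sum>b<d. jamiolkowski d \<Phi> $$ (b * d + k, b * d + l)) = (if k = l then 1 / of_nat d else 0)"
proof -
  have "(\<Sum>b<d. jamiolkowski d \<Phi> $$ (b * d + k, b * d + l)) = (\<Sum>b<d. \<Phi> (ket_bra d k l) $$ (b, b)) / of_nat d"
    using k l by (simp add: jamiolkowski_index sum_divide_distrib)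
  also have "(\<Sum>b<d. \<Phi> (ket_bra d k l) $$ (b, b)) = (\<Sum>b<d. ket_bra d k l $$ (b, b))"
    using Q unfolding quantum_channel_def by (auto simp: ket_bra_def)
  also have "\<dots> = (\<Sum>b<d. if b = k then (if k = l then 1 else 0) else 0)"
    by (intro sum.cong refl) (auto simp: ket_bra_def)
  finally show ?thesis using k by simp
qed

lemma jamiolkowski_diag:
  assumes "classical_action_is d \<Phi> T" "a < d" "j < d"
  shows "jamiolkowski d \<Phi> $$ (a * d + j, a * d + j) = complex_of_real (T $$ (a, j) / real d)"
  using assms unfolding classical_action_is_def by (simp add: jamiolkowski_index)

section \<open>Block weights of eigenvectors\<close>

definition block_quad_form :: "nat \<Rightarrow> complex mat \<Rightarrow> nat \<Rightarrow> (nat \<Rightarrow> complex) \<Rightarrow> complex" where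
  "block_quad_form n X a x = (\<Sum>k<n. \<Sum>j<n. cnj (x k) * X $$ (a * n + k, a * n + j) * x j)"

lemma block_quad_form_nonneg:
  assumes psd: "psd_mat (d * n) X" and a: "a < d"
  shows "Im (block_quad_form n X a x) = 0" "Re (block_quad_form n X a x) \<ge> 0"
proof -
  define y where "y = vec (d * n) (\<lambda>p. if p div n = a then x (p mod n) else 0)"
  have y: "y $ (b * n + k) = (if b = a then x k else 0)" if "b < d" "k < n" for b k
    using that block_index_less[OF that] unfolding y_def by simp
  have sum_if: "(\<Sum>z\<in>A. if P then f z else 0) = (if P then \<Sum>z\<in>A. f z else 0)"
    for P and A :: "nat set" and f :: "nat \<Rightarrow> complex" by simp
  have "quad_form (d * n) X y = block_quad_form n X a x"
    unfolding quad_form_def sum_blocks block_quad_form_def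
    using a by (simp add: y sum_if if_distrib[of cnj] if_distrib[of "\<lambda>z. z * _"] if_distrib[of "(*) _"] cong: if_cong)
  moreover have "y \<in> carrier_vec (d * n)" unfolding y_def by simp
  ultimately show "Im (block_quad_form n X a x) = 0" "Re (block_quad_form n X a x) \<ge> 0"
    using psd unfolding psd_mat_iff_quad_form by auto
qed

text \<open>Each diagonal block of a PSD matrix is dominated by the sum of all diagonal blocks.\<close>
lemma block_quad_form_le:
  assumes psd: "psd_mat (d * n) X" and a: "a < d"
    and partial_trace: "\<And>k j. k < n \<Longrightarrow> j < n \<Longrightarrow>
      (\<Sum>b<d. X $$ (b * n + k, b * n + j)) = (if k = j then complex_of_real c else 0)"
  shows "Re (block_quad_form n X a x) \<le> c * (\<Sum>k<n. (cmod (x k))\<^sup>2)"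
proof -
  have "(\<Sum>b<d. block_quad_form n X b x)
      = (\<Sum>k<n. \<Sum>j<n. cnj (x k) * (\<Sum>b<d. X $$ (b * n + k, b * n + j)) * x j)"
    unfolding block_quad_form_def sum_distrib_left sum_distrib_right
    by (subst sum.swap, rule sum.cong[OF refl], rule sum.swap)
  also have "\<dots> = (\<Sum>k<n. cnj (x k) * complex_of_real c * x k)"
    by (intro sum.cong refl) (simp add: partial_trace if_distrib[of "\<lambda>z. z * _"] if_distrib[of "(*) _"] cong: if_cong)
  also have "\<dots> = complex_of_real (c * (\<Sum>k<n. (cmod (x k))\<^sup>2))"
    unfolding sum_distrib_left of_real_sum by (intro sum.cong refl) (simp add: complex_mult_cnj_cmod mult_ac)
  finally have total: "(\<Sum>b<d. Re (block_quad_form n X b x)) = c * (\<Sum>k<n. (cmod (x k))\<^sup>2)"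
    by (metis Re_complex_of_real Re_sum)
  have "Re (block_quad_form n X a x) \<le> (\<Sum>b<d. Re (block_quad_form n X b x))"
    using a block_quad_form_nonneg[OF psd] by (intro member_le_sum) auto
  then show ?thesis unfolding total .
qed

lemma quad_form_unitary_diag:
  fixes x :: "'b \<Rightarrow> complex" and \<iota> :: "'b \<Rightarrow> nat"
  assumes U: "U \<in> carrier_mat N N" and l: "length l = N" and \<iota>: "\<And>k. k \<in> K \<Longrightarrow> \<iota> k < N"
  shows "(\<Sum>k\<in>K. \<Sum>j\<in>K. cnj (x k) * (U * real_diag_mat l * mat_adjoint U) $$ (\<iota> k, \<iota> j) * x j)
    = (\<Sum>m<N. complex_of_real (l ! m * (cmod (\<Sum>k\<in>K. cnj (x k) * U $$ (\<iota> k, m)))\<^sup>2))"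
proof -
  define w where "w m = (\<Sum>k\<in>K. cnj (x k) * U $$ (\<iota> k, m))" for m
  have "(\<Sum>k\<in>K. \<Sum>j\<in>K. cnj (x k) * (U * real_diag_mat l * mat_adjoint U) $$ (\<iota> k, \<iota> j) * x j)
    = (\<Sum>k\<in>K. \<Sum>j\<in>K. \<Sum>m<N. (cnj (x k) * U $$ (\<iota> k, m)) * (complex_of_real (l ! m) * (x j * cnj (U $$ (\<iota> j, m)))))"
    using \<iota> by (intro sum.cong refl) (simp add: unitary_diag_index[OF U l] sum_distrib_left sum_distrib_right mult_ac)
  also have "\<dots> = (\<Sum>m<N. \<Sum>k\<in>K. \<Sum>j\<in>K. (cnj (x k) * U $$ (\<iota> k, m)) * (complex_of_real (l ! m) * (x j * cnj (U $$ (\<iota> j, m)))))"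
    by (subst sum.swap, rule sum.cong[OF refl], rule sum.swap)
  also have "\<dots> = (\<Sum>m<N. w m * (complex_of_real (l ! m) * cnj (w m)))"
    unfolding w_def cnj_sum complex_cnj_mult complex_cnj_cnj
    by (rule sum.cong[OF refl]) (simp only: sum_distrib_left sum_distrib_right, rule sum.swap)
  also have "\<dots> = (\<Sum>m<N. complex_of_real (l ! m * (cmod (w m))\<^sup>2))"
    by (rule sum.cong[OF refl]) (simp add: complex_mult_cnj_cmod complex_cnj_mult_cmod mult_ac)
  finally show ?thesis unfolding w_def .
qed

lemma unitary_diag_psd_eigenvalue_nonneg:
  assumes U: "unitary_mat N U" and l: "length l = N"
    and psd: "psd_mat N (U * real_diag_mat l * mat_adjoint U)" and m: "m < N"
  shows "l ! m \<ge> 0"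
proof -
  let ?x = "\<lambda>p. U $$ (p, m)"
  have "quad_form N (U * real_diag_mat l * mat_adjoint U) (vec N ?x)
      = (\<Sum>i<N. complex_of_real (l ! i * (cmod (\<Sum>p<N. cnj (?x p) * U $$ (p, i)))\<^sup>2))"
    unfolding quad_form_def using quad_form_unitary_diag[OF unitary_matD(1)[OF U] l, of "{..<N}" id ?x]
    by simp
  also have "\<dots> = (\<Sum>i<N. if i = m then complex_of_real (l ! i) else 0)"
    by (rule sum.cong[OF refl]) (simp add: unitary_mat_orthonormal_cols[OF U m])
  finally have "quad_form N (U * real_diag_mat l * mat_adjoint U) (vec N ?x) = complex_of_real (l ! m)"
    using m by simp
  then show ?thesis using psd unfolding psd_mat_iff_quad_form by (metis Re_complex_of_real vec_carrier)
qed

definition block_weight :: "nat \<Rightarrow> complex mat \<Rightarrow> nat \<Rightarrow> nat \<Rightarrow> real" where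
  "block_weight n U a i = (\<Sum>k<n. (cmod (U $$ (a * n + k, i)))\<^sup>2)"

lemma block_weight_nonneg: "block_weight n U a i \<ge> 0"
  unfolding block_weight_def by (intro sum_nonneg) auto

lemma sum_block_weight:
  assumes U: "unitary_mat (d * n) U" and i: "i < d * n"
  shows "(\<Sum>a<d. block_weight n U a i) = 1"
proof -
  have "complex_of_real (\<Sum>a<d. block_weight n U a i) = (\<Sum>p<d * n. cnj (U $$ (p, i)) * U $$ (p, i))"
    unfolding block_weight_def sum_blocks of_real_sum by (simp add: complex_mult_cnj_cmod complex_cnj_mult_cmod mult.commute)
  also have "\<dots> = 1" using unitary_mat_orthonormal_cols[OF U i i] by simp
  finally show ?thesis by (simp only: of_real_eq_1_iff)
qed

lemma sum_eigenvalue_block_weight: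
  assumes U: "U \<in> carrier_mat (d * n) (d * n)" and l: "length l = d * n" and a: "a < d"
  shows "complex_of_real (\<Sum>i<d * n. l ! i * block_weight n U a i)
    = (\<Sum>k<n. (U * real_diag_mat l * mat_adjoint U) $$ (a * n + k, a * n + k))"
proof -
  have "complex_of_real (\<Sum>i<d * n. l ! i * block_weight n U a i)
      = (\<Sum>k<n. \<Sum>i<d * n. U $$ (a * n + k, i) * complex_of_real (l ! i) * cnj (U $$ (a * n + k, i)))"
    unfolding block_weight_def sum_distrib_left of_real_sum
    by (subst sum.swap) (simp add: complex_mult_cnj_cmod complex_cnj_mult_cmod mult_ac)
  also have "\<dots> = (\<Sum>k<n. (U * real_diag_mat l * mat_adjoint U) $$ (a * n + k, a * n + k))"
    using a by (intro sum.cong refl) (simp add: unitary_diag_index[OF U l] block_index_less)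
  finally show ?thesis .
qed

text \<open>With \<open>x\<close> the restriction of the \<open>i\<close>-th eigenvector to block \<open>a\<close>, the block form is
  at least \<open>l\<^sub>i (block_weight n U a i)\<^sup>2\<close> and at most \<open>c (block_weight n U a i)\<close>.\<close>
lemma eigenvalue_block_weight_le:
  assumes U: "unitary_mat (d * n) U" and l: "length l = d * n"
    and l_nonneg: "\<And>m. m < d * n \<Longrightarrow> l ! m \<ge> 0" and a: "a < d" and i: "i < d * n" and c: "c \<ge> 0"
    and bound: "\<And>x. Re (block_quad_form n (U * real_diag_mat l * mat_adjoint U) a x)
      \<le> c * (\<Sum>k<n. (cmod (x k))\<^sup>2)"
  shows "l ! i * block_weight n U a i \<le> c"
proof -
  define s where "s = block_weight n U a i"
  define x where "x k = U $$ (a * n + k, i)" for k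
  define w where "w m = (\<Sum>k<n. cnj (x k) * U $$ (a * n + k, m))" for m
  have "block_quad_form n (U * real_diag_mat l * mat_adjoint U) a x
      = (\<Sum>m<d * n. complex_of_real (l ! m * (cmod (w m))\<^sup>2))"
    unfolding block_quad_form_def w_def
    by (rule quad_form_unitary_diag[OF unitary_matD(1)[OF U] l]) (simp add: a block_index_less)
  then have form: "Re (block_quad_form n (U * real_diag_mat l * mat_adjoint U) a x)
      = (\<Sum>m<d * n. l ! m * (cmod (w m))\<^sup>2)"
    by simp
  have "w i = complex_of_real s"
    unfolding w_def s_def block_weight_def x_def of_real_sum by (simp add: complex_mult_cnj_cmod complex_cnj_mult_cmod mult.commute)
  then have "l ! i * s\<^sup>2 = l ! i * (cmod (w i))\<^sup>2" using block_weight_nonneg by (simp add: s_def)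
  also have "\<dots> \<le> (\<Sum>m<d * n. l ! m * (cmod (w m))\<^sup>2)"
    using i l_nonneg by (intro member_le_sum) auto
  also have "\<dots> \<le> c * s"
    unfolding form[symmetric] s_def block_weight_def x_def by (rule bound)
  finally have "(l ! i * s) * s \<le> c * s" by (simp add: power2_eq_square mult_ac)
  then show ?thesis
    using c block_weight_nonneg[of n U a i] unfolding s_def
    by (cases "block_weight n U a i = 0") (auto dest: mult_right_le_imp_le)
qed

lemma sum_le_sum_min_of_split:
  fixes l :: "'i \<Rightarrow> real" and w :: "'b \<Rightarrow> 'i \<Rightarrow> real"
  assumes I: "finite I" and B: "finite B" and S: "S \<subseteq> I"
    and split: "\<And>i. i \<in> I \<Longrightarrow> (\<Sum>a\<in>B. w a i) = 1"
    and nonneg: "\<And>a i. a \<in> B \<Longrightarrow> i \<in> I \<Longrightarrow> 0 \<le> l i * w a i"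
    and bound: "\<And>a i. a \<in> B \<Longrightarrow> i \<in> I \<Longrightarrow> l i * w a i \<le> c"
  shows "(\<Sum>i\<in>S. l i) \<le> (\<Sum>a\<in>B. min (real (card S) * c) (\<Sum>i\<in>I. l i * w a i))"
proof -
  have "(\<Sum>i\<in>S. l i) = (\<Sum>a\<in>B. \<Sum>i\<in>S. l i * w a i)"
    using S split by (subst sum.swap) (auto simp: sum_distrib_left[symmetric] intro!: sum.cong)
  also have "\<dots> \<le> (\<Sum>a\<in>B. min (real (card S) * c) (\<Sum>i\<in>I. l i * w a i))"
  proof (rule sum_mono)
    fix a assume a: "a \<in> B"
    have "(\<Sum>i\<in>S. l i * w a i) \<le> (\<Sum>i\<in>S. c)"
      using a S bound by (intro sum_mono) auto
    moreover have "(\<Sum>i\<in>S. l i * w a i) \<le> (\<Sum>i\<in>I. l i * w a i)"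
      using a S I nonneg by (intro sum_mono2) auto
    ultimately show "(\<Sum>i\<in>S. l i * w a i) \<le> min (real (card S) * c) (\<Sum>i\<in>I. l i * w a i)"
      by (simp add: mult.commute)
  qed
  finally show ?thesis .
qed

lemma jamiolkowski_eigenvalue_sum_le:
  assumes Q: "quantum_channel d \<Phi>" and C: "classical_action_is d \<Phi> T"
    and U: "unitary_mat (d * d) U" and l: "length l = d * d"
    and J: "jamiolkowski d \<Phi> = U * real_diag_mat l * mat_adjoint U" and S: "S \<subseteq> {..<d * d}"
  shows "(\<Sum>i\<in>S. l ! i) \<le> (\<Sum>a<d. min (real (card S)) (\<Sum>j<d. T $$ (a, j))) / real d"
proof -
  have psd: "psd_mat (d * d) (U * real_diag_mat l * mat_adjoint U)"
    using psd_mat_jamiolkowski[OF Q] unfolding J .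
  have l_nonneg: "l ! m \<ge> 0" if "m < d * d" for m
    using unitary_diag_psd_eigenvalue_nonneg[OF U l psd that] .
  have row: "(\<Sum>i<d * d. l ! i * block_weight d U a i) = (\<Sum>j<d. T $$ (a, j)) / real d" if a: "a < d" for a
  proof -
    have "complex_of_real (\<Sum>i<d * d. l ! i * block_weight d U a i)
        = (\<Sum>k<d. jamiolkowski d \<Phi> $$ (a * d + k, a * d + k))"
      unfolding J by (rule sum_eigenvalue_block_weight[OF unitary_matD(1)[OF U] l a])
    also have "\<dots> = complex_of_real (\<Sum>j<d. T $$ (a, j) / real d)"
      unfolding of_real_sum by (intro sum.cong refl) (simp add: jamiolkowski_diag[OF C a])
    finally show ?thesis by (simp only: of_real_eq_iff sum_divide_distrib)
  qed
  have "\<And>a x. a < d \<Longrightarrow> Re (block_quad_form d (U * real_diag_mat l * mat_adjoint U) a x)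
      \<le> 1 / real d * (\<Sum>k<d. (cmod (x k))\<^sup>2)"
    by (rule block_quad_form_le[OF psd]) (simp_all add: J[symmetric] jamiolkowski_partial_trace[OF Q])
  then have bound: "l ! i * block_weight d U a i \<le> 1 / real d" if "a < d" "i < d * d" for a i
    using eigenvalue_block_weight_le[OF U l l_nonneg] that by simp
  have "(\<Sum>i\<in>S. l ! i)
      \<le> (\<Sum>a<d. min (real (card S) * (1 / real d)) (\<Sum>i<d * d. l ! i * block_weight d U a i))"
    using S sum_block_weight[OF U] l_nonneg block_weight_nonneg bound
    by (intro sum_le_sum_min_of_split) auto
  also have "\<dots> = (\<Sum>a<d. min (real (card S)) (\<Sum>j<d. T $$ (a, j))) / real d"
    by (simp add: row sum_divide_distrib min_divide_distrib_right)
  finally show ?thesis .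
qed

section \<open>Partial sums of the majorising vector\<close>

lemma sum_staircase_eq_min:
  fixes r :: real
  assumes "r \<ge> 0"
  shows "(\<Sum>t<k. if t < nat \<lfloor>r\<rfloor> then 1 else if t = nat \<lfloor>r\<rfloor> then r - of_int \<lfloor>r\<rfloor> else 0)
    = min (real k) r"
proof (induction k)
  case (Suc k)
  have fl: "real (nat \<lfloor>r\<rfloor>) = of_int \<lfloor>r\<rfloor>" "of_int \<lfloor>r\<rfloor> \<le> r" "r < of_int \<lfloor>r\<rfloor> + 1"
    using assms by linarith+
  consider "k < nat \<lfloor>r\<rfloor>" | "k = nat \<lfloor>r\<rfloor>" | "k > nat \<lfloor>r\<rfloor>" by linarith
  then show ?case
  proof cases
    case 1
    then have "real (Suc k) \<le> real (nat \<lfloor>r\<rfloor>)" by linarith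
    then have "real k + 1 \<le> r" using fl by linarith
    then show ?thesis using 1 Suc by (simp add: min_def)
  next
    case 2
    then have "real k = of_int \<lfloor>r\<rfloor>" using fl by simp
    then have "real k \<le> r" "r \<le> real (Suc k)" using fl by linarith+
    then show ?thesis using 2 Suc by (simp add: min_absorb1 min_absorb2)
  next
    case 3
    then have "real (Suc (nat \<lfloor>r\<rfloor>)) \<le> real k" by linarith
    then have "r \<le> real k" using fl by linarith
    then show ?thesis using 3 Suc by (simp add: min_absorb2)
  qed
qed (simp add: assms)

lemma row_sum_nonneg:
  "column_stochastic d T \<Longrightarrow> a < d \<Longrightarrow> (\<Sum>j<d. T $$ (a, j)) \<ge> 0"
  unfolding column_stochastic_def by (intro sum_nonneg) auto

lemma mu_maj_nth: "t < d * d \<Longrightarrow> mu_maj d T ! t = (\<Sum>a<d. s_vec d T a ! t) / real d"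
  unfolding mu_maj_def by simp

lemma s_vec_nth:
  "t < d * d \<Longrightarrow> s_vec d T a ! t = (let r = (\<Sum>j<d. T $$ (a, j)) in
     if t < nat \<lfloor>r\<rfloor> then 1 else if t = nat \<lfloor>r\<rfloor> then r - of_int \<lfloor>r\<rfloor> else 0)"
  unfolding s_vec_def Let_def by simp

lemma sum_take_mu_maj:
  assumes T: "column_stochastic d T" and k: "k \<le> d * d"
  shows "sum_list (take k (mu_maj d T)) = (\<Sum>a<d. min (real k) (\<Sum>j<d. T $$ (a, j))) / real d"
proof -
  have "sum_list (take k (mu_maj d T)) = (\<Sum>t<k. mu_maj d T ! t)"
    using k by (simp add: sum_list_sum_nth lessThan_atLeast0 min_def mu_maj_def)
  also have "\<dots> = (\<Sum>a<d. \<Sum>t<k. s_vec d T a ! t) / real d"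
    using k by (subst sum.swap) (simp add: mu_maj_nth sum_divide_distrib)
  also have "\<dots> = (\<Sum>a<d. min (real k) (\<Sum>j<d. T $$ (a, j))) / real d"
    using k row_sum_nonneg[OF T]
    by (intro arg_cong[where f = "\<lambda>x. x / _"] sum.cong refl)
      (simp add: s_vec_nth Let_def sum_staircase_eq_min[symmetric])
  finally show ?thesis .
qed

lemma s_vec_antimono:
  assumes "t1 \<le> t2" "t2 < d * d" "(\<Sum>j<d. T $$ (a, j)) \<ge> 0"
  shows "s_vec d T a ! t2 \<le> s_vec d T a ! t1"
proof -
  define r where "r = (\<Sum>j<d. T $$ (a, j))"
  have "r - of_int \<lfloor>r\<rfloor> \<ge> 0" "r - of_int \<lfloor>r\<rfloor> \<le> 1" by linarith+
  then show ?thesis using assms by (auto simp: s_vec_nth Let_def r_def[symmetric])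
qed

lemma rev_sort_mu_maj:
  assumes T: "column_stochastic d T"
  shows "rev (sort (mu_maj d T)) = mu_maj d T"
proof -
  have "sorted_wrt (\<ge>) (mu_maj d T)"
    unfolding sorted_wrt_iff_nth_less
  proof (intro allI impI)
    fix i j assume "i < j" "j < length (mu_maj d T)"
    then have ij: "i < j" "j < d * d" by (auto simp: mu_maj_def)
    have "(\<Sum>a<d. s_vec d T a ! j) \<le> (\<Sum>a<d. s_vec d T a ! i)"
      using s_vec_antimono ij row_sum_nonneg[OF T] by (intro sum_mono) auto
    then show "mu_maj d T ! j \<le> mu_maj d T ! i"
      using ij by (simp add: mu_maj_nth divide_right_mono)
  qed
  then have "sorted (rev (mu_maj d T))" by (simp add: sorted_wrt_rev)
  from properties_for_sort[OF _ this] have "sort (mu_maj d T) = rev (mu_maj d T)" by simp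
  then show ?thesis by simp
qed

lemma sum_take_rev_sort:
  fixes xs :: "real list"
  assumes k: "k \<le> length xs"
  obtains S where "S \<subseteq> {..<length xs}" "card S = k" "sum_list (take k (rev (sort xs))) = (\<Sum>i\<in>S. xs ! i)"
proof -
  have "mset (rev (sort xs)) = mset xs" by simp
  then obtain p where p: "p permutes {..<length xs}" and pxs: "permute_list p xs = rev (sort xs)"
    by (rule mset_eq_permutation)
  have inj: "inj_on p {..<k}" using permutes_inj_on[OF p] .
  have "sum_list (take k (rev (sort xs))) = (\<Sum>t<k. rev (sort xs) ! t)"
    using k by (simp add: sum_list_sum_nth lessThan_atLeast0 min_def)
  also have "\<dots> = (\<Sum>t<k. xs ! p t)"
    unfolding pxs[symmetric] using k by (intro sum.cong refl) (simp add: permute_list_nth[OF p])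
  also have "\<dots> = (\<Sum>i\<in>p ` {..<k}. xs ! i)" by (simp add: sum.reindex[OF inj])
  finally have sum: "sum_list (take k (rev (sort xs))) = (\<Sum>i\<in>p ` {..<k}. xs ! i)" .
  have "p ` {..<k} \<subseteq> {..<length xs}"
    using k permutes_in_image[OF p] unfolding image_subset_iff by (metis lessThan_iff order_less_le_trans)
  from that[OF this _ sum] show ?thesis using card_image[OF inj] by simp
qed

theorem mainTheorem3:
  fixes d :: nat and T :: "real mat" and \<Phi> :: "complex mat \<Rightarrow> complex mat"
  assumes "d \<ge> 1"
    and "column_stochastic d T"
    and "quantum_channel d \<Phi>"
    and "classical_action_is d \<Phi> T"
  shows "majorizes (mu_maj d T) (eigvals_desc (jamiolkowski d \<Phi>))"
proof -
  let ?J = "jamiolkowski d \<Phi>"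
  have J: "?J \<in> carrier_mat (d * d) (d * d)" "mat_adjoint ?J = ?J"
    using jamiolkowski_carrier psd_mat_hermitian[OF psd_mat_jamiolkowski[OF assms(3)]] by auto
  obtain U l where U: "unitary_mat (d * d) U" and l: "length l = d * d"
    and JU: "?J = U * real_diag_mat l * mat_adjoint U"
    using hermitian_unitary_diagonalization[OF J] .
  have eig: "eigvals_desc ?J = rev (sort l)"
    using eigvals_desc_eq_rev_sort[OF J(1) l] char_poly_unitary_diag[OF U l] JU by simp
  have sort_eig: "sort (rev (sort l)) = sort l" by (rule properties_for_sort) simp_all
  show ?thesis
    unfolding majorizes_def eig sort_eig rev_sort_mu_maj[OF assms(2)]
  proof (intro conjI ballI)
    show "length (mu_maj d T) = length (rev (sort l))" using l by (simp add: mu_maj_def)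
    fix k assume "k \<in> {1..length (mu_maj d T)}"
    then have k: "k \<le> length l" using l by (simp add: mu_maj_def)
    obtain S where S: "S \<subseteq> {..<d * d}" "card S = k"
      and top: "sum_list (take k (rev (sort l))) = (\<Sum>i\<in>S. l ! i)"
      using sum_take_rev_sort[OF k] l by metis
    have "(\<Sum>i\<in>S. l ! i) \<le> (\<Sum>a<d. min (real k) (\<Sum>j<d. T $$ (a, j))) / real d"
      using jamiolkowski_eigenvalue_sum_le[OF assms(3,4) U l JU S(1)] S(2) by simp
    also have "\<dots> = sum_list (take k (mu_maj d T))"
      using sum_take_mu_maj[OF assms(2)] k l by simp
    finally show "sum_list (take k (rev (sort l))) \<le> sum_list (take k (mu_maj d T))"
      unfolding top .
  qed
qed

end
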